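(* Let $\gamma\ge1$, $u\in\mathbb N_{\ge1}$, and let $X_1,\dots,X_u$ be independent random variables with $X_m\sim\mathrm{Bernoulli}(1-1/m^\gamma)$ for $m=1,\dots,u$. Then for every $\eta\ge1$ with $\lceil\sum_{m=1}^u1/m^\gamma\rceil\le\eta\le u$, $$\mathbb P\Bigl(\sum_{m=1}^uX_m<u-\eta\Bigr)\le\frac{u^{1+\eta}}{\eta^{(\gamma+1)\eta}}\exp\bigl((\gamma+1)\eta\bigr).$$ *)

theory Defs
  imports "HOL-Probability.Probability"
begin

end

theory Submission
  imports Defs
begin

text \<open>
  If fewer than \<open>u - \<eta>\<close> of the \<open>X\<^sub>m\<close> equal one, then \<open>X\<^sub>m = 0\<close> for all \<open>m\<close> in some
  \<open>\<eta>\<close>-element set \<open>S \<subseteq> {1..u}\<close>. Independence and the union bound over all such \<open>S\<close>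
  bound the probability by the sum over \<open>S\<close> of \<open>\<Prod>m\<in>S. 1 / m powr \<gamma>\<close>. A product of \<open>\<eta>\<close>
  distinct positive integers is at least \<open>\<eta>!\<close>, so this is at most
  \<open>(u choose \<eta>) / \<eta>! powr \<gamma> \<le> u ^ \<eta> / \<eta>! powr (\<gamma> + 1)\<close>, and \<open>\<eta>! \<ge> (\<eta> / e) ^ \<eta>\<close>
  gives the stated bound.
\<close>

lemma power_div_fact_le_exp:
  fixes x :: real
  assumes "0 \<le> x"
  shows "x ^ n / fact n \<le> exp x"
proof -
  have "(\<Sum>k\<in>{n}. inverse (fact k) * x ^ k) \<le> (\<Sum>k. inverse (fact k) * x ^ k)"
    using assms by (intro sum_le_suminf[OF summable_exp]) auto
  then show ?thesis
    by (simp add: exp_def field_simps)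
qed

lemma fact_le_prod_of_nat:
  assumes "finite S" and "0 \<notin> S"
  shows "fact (card S) \<le> (\<Prod>m\<in>S. real m)"
  using assms
proof (induction S rule: finite_ranking_induct[where f = id])
  case empty
  then show ?case by simp
next
  case (insert x S)
  show ?case
  proof (cases "x \<in> S")
    case True
    with insert show ?thesis by (simp add: insert_absorb)
  next
    case False
    have "insert x S \<subseteq> {1..x}"
      using insert.hyps(2) insert.prems by (auto simp: Suc_le_eq) (metis gr0I)
    then have "Suc (card S) \<le> x"
      using card_mono[of "{1..x}" "insert x S"] insert.hyps(1) False by simp
    moreover have "fact (card S) \<le> (\<Prod>m\<in>S. real m)"
      using insert by simp
    ultimately have "real (Suc (card S)) * fact (card S) \<le> real x * (\<Prod>m\<in>S. real m)"
      by (intro mult_mono) auto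
    then show ?thesis
      using insert.hyps(1) False by simp
  qed
qed

lemma fact_powr_ge:
  fixes a :: real
  assumes "0 \<le> a"
  shows "real n powr (a * n) / exp (a * n) \<le> fact n powr a"
proof (cases "n = 0")
  case False
  have "real n ^ n / exp (real n) \<le> fact n"
    using power_div_fact_le_exp[of "real n" n] by (simp add: field_simps)
  then have "(real n ^ n / exp (real n)) powr a \<le> fact n powr a"
    using assms by (intro powr_mono2) auto
  moreover have "(real n ^ n / exp (real n)) powr a = real n powr (a * n) / exp (a * n)"
    using False by (simp add: powr_divide powr_realpow[symmetric] powr_powr exp_powr_real
        mult.commute)
  ultimately show ?thesis by simp
qed simp

lemma sum_card_subsets_prod_inverse_powr_le:
  fixes \<gamma> :: real
  assumes "finite I" and "0 \<notin> I" and "0 \<le> \<gamma>"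
  shows "(\<Sum>S | S \<subseteq> I \<and> card S = k. \<Prod>m\<in>S. 1 / real m powr \<gamma>)
           \<le> real (card I choose k) / fact k powr \<gamma>"
proof -
  have "(\<Prod>m\<in>S. 1 / real m powr \<gamma>) \<le> 1 / fact k powr \<gamma>"
    if "S \<subseteq> I" and "card S = k" for S
  proof -
    have S: "finite S" "0 \<notin> S"
      using that assms finite_subset by auto
    have "(\<Prod>m\<in>S. 1 / real m powr \<gamma>) = 1 / (\<Prod>m\<in>S. real m) powr \<gamma>"
      by (simp add: prod_powr_distrib prod_dividef)
    also have "\<dots> \<le> 1 / fact k powr \<gamma>"
    proof -
      have "0 < (\<Prod>m\<in>S. real m)"
        using S by (intro prod_pos) (metis gr0I of_nat_0_less_iff)
      then show ?thesis
        using fact_le_prod_of_nat[OF S] that(2) assms(3)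
        by (intro divide_left_mono powr_mono2 mult_pos_pos) auto
    qed
    finally show ?thesis .
  qed
  then have "(\<Sum>S | S \<subseteq> I \<and> card S = k. \<Prod>m\<in>S. 1 / real m powr \<gamma>)
               \<le> (\<Sum>S | S \<subseteq> I \<and> card S = k. 1 / fact k powr \<gamma>)"
    by (intro sum_mono) auto
  also have "\<dots> = real (card I choose k) / fact k powr \<gamma>"
    using n_subsets[OF assms(1)] by simp
  finally show ?thesis .
qed

lemma choose_div_fact_powr_le:
  fixes \<gamma> :: real
  assumes "0 \<le> \<gamma>" and "1 \<le> u" and "1 \<le> k"
  shows "real (u choose k) / fact k powr \<gamma>
           \<le> real u powr (1 + real k) / real k powr ((\<gamma> + 1) * real k) * exp ((\<gamma> + 1) * real k)"
proof -
  have "real (u choose k) / fact k powr \<gamma> = real (u choose k) * fact k / fact k powr (\<gamma> + 1)"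
    by (simp add: powr_add)
  also have "\<dots> \<le> real u ^ k / fact k powr (\<gamma> + 1)"
  proof -
    have "real ((u choose k) * fact k) \<le> real (u ^ k)"
      using binomial_fact_pow by (simp only: of_nat_le_iff)
    then show ?thesis
      by (intro divide_right_mono) simp_all
  qed
  also have "\<dots> \<le> real u ^ k / (real k powr ((\<gamma> + 1) * k) / exp ((\<gamma> + 1) * k))"
    using fact_powr_ge[of "\<gamma> + 1" k] assms by (intro divide_left_mono) auto
  also have "\<dots> = real u ^ k / real k powr ((\<gamma> + 1) * real k) * exp ((\<gamma> + 1) * real k)"
    by simp
  also have "\<dots> \<le> real u powr (1 + real k) / real k powr ((\<gamma> + 1) * real k) * exp ((\<gamma> + 1) * real k)"
  proof -
    have "real u ^ k \<le> real u powr (1 + real k)"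
      using assms by (simp add: powr_add powr_realpow)
    then show ?thesis
      by (intro mult_right_mono divide_right_mono) auto
  qed
  finally show ?thesis .
qed

lemma card_occurring_ge_eq_Union:
  assumes "finite I" and "1 \<le> k" and "\<And>i. i \<in> I \<Longrightarrow> A i \<subseteq> \<Omega>"
  shows "{x \<in> \<Omega>. k \<le> card {i \<in> I. x \<in> A i}} = (\<Union>S\<in>{S. S \<subseteq> I \<and> card S = k}. \<Inter>i\<in>S. A i)"
proof (intro equalityI subsetI)
  fix x assume "x \<in> {x \<in> \<Omega>. k \<le> card {i \<in> I. x \<in> A i}}"
  then have "k \<le> card {i \<in> I. x \<in> A i}"
    by simp
  then obtain S where "S \<subseteq> {i \<in> I. x \<in> A i}" and "card S = k"
    by (rule obtain_subset_with_card_n)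
  then show "x \<in> (\<Union>S\<in>{S. S \<subseteq> I \<and> card S = k}. \<Inter>i\<in>S. A i)"
    by blast
next
  fix x assume "x \<in> (\<Union>S\<in>{S. S \<subseteq> I \<and> card S = k}. \<Inter>i\<in>S. A i)"
  then obtain S where S: "S \<subseteq> I" "card S = k" and x: "\<And>i. i \<in> S \<Longrightarrow> x \<in> A i"
    by blast
  have "S \<noteq> {}"
    using S(2) assms(2) by auto
  then obtain i where "i \<in> S"
    by blast
  then have "x \<in> \<Omega>"
    using S(1) x assms(3) by blast
  moreover have "card S \<le> card {i \<in> I. x \<in> A i}"
    using S(1) x assms(1) by (intro card_mono) auto
  ultimately show "x \<in> {x \<in> \<Omega>. k \<le> card {i \<in> I. x \<in> A i}}"
    using S(2) by simp
qed

lemma (in prob_space) Inter_card_subsets_in_events: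
  assumes "A ` I \<subseteq> events" and "finite I" and "1 \<le> k"
  shows "(\<lambda>S. \<Inter>i\<in>S. A i) ` {S. S \<subseteq> I \<and> card S = k} \<subseteq> events"
proof (intro image_subsetI, elim CollectE conjE)
  fix S assume "S \<subseteq> I" and "card S = k"
  moreover from this have "finite S" and "S \<noteq> {}"
    using assms(2,3) finite_subset by fastforce+
  ultimately show "(\<Inter>i\<in>S. A i) \<in> events"
    using assms(1) by (intro sets.finite_INT) auto
qed

lemma (in prob_space) card_occurring_ge_in_events:
  assumes "A ` I \<subseteq> events" and "finite I" and "1 \<le> k"
  shows "{x \<in> space M. k \<le> card {i \<in> I. x \<in> A i}} \<in> events"
proof -
  have into_space: "\<And>i. i \<in> I \<Longrightarrow> A i \<subseteq> space M"
    using assms(1) sets.sets_into_space by blast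
  have "(\<Union>S\<in>{S. S \<subseteq> I \<and> card S = k}. \<Inter>i\<in>S. A i) \<in> events"
    using Inter_card_subsets_in_events[OF assms] assms(2) by (intro sets.finite_UN) auto
  then show ?thesis
    by (simp only: card_occurring_ge_eq_Union[OF assms(2,3) into_space])
qed

lemma (in prob_space) prob_card_occurring_ge_le:
  assumes "indep_events A I" and "finite I" and "1 \<le> k"
  shows "prob {x \<in> space M. k \<le> card {i \<in> I. x \<in> A i}}
           \<le> (\<Sum>S | S \<subseteq> I \<and> card S = k. \<Prod>i\<in>S. prob (A i))"
proof -
  have events: "A ` I \<subseteq> events"
    using assms(1) by (simp add: indep_events_def)
  then have into_space: "\<And>i. i \<in> I \<Longrightarrow> A i \<subseteq> space M"
    using sets.sets_into_space by blast
  have "prob {x \<in> space M. k \<le> card {i \<in> I. x \<in> A i}}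
          = prob (\<Union>S\<in>{S. S \<subseteq> I \<and> card S = k}. \<Inter>i\<in>S. A i)"
    by (simp only: card_occurring_ge_eq_Union[OF assms(2,3) into_space])
  also have "\<dots> \<le> (\<Sum>S | S \<subseteq> I \<and> card S = k. prob (\<Inter>i\<in>S. A i))"
    using Inter_card_subsets_in_events[OF events assms(2,3)] assms(2)
    by (intro finite_measure_subadditive_finite) simp_all
  also have "\<dots> = (\<Sum>S | S \<subseteq> I \<and> card S = k. \<Prod>i\<in>S. prob (A i))"
  proof (intro sum.cong refl, elim CollectE conjE)
    fix S assume "S \<subseteq> I" and "card S = k"
    moreover from this have "finite S" and "S \<noteq> {}"
      using assms(2,3) finite_subset by fastforce+
    ultimately show "prob (\<Inter>i\<in>S. A i) = (\<Prod>i\<in>S. prob (A i))"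
      using assms(1) by (simp add: indep_events_def)
  qed
  finally show ?thesis .
qed

lemma sum_zero_one_eq_card:
  fixes f :: "'a \<Rightarrow> real"
  assumes "finite I" and "\<forall>i\<in>I. f i \<in> {0, 1}"
  shows "sum f I = real (card I) - real (card {i \<in> I. f i = 0})"
proof -
  have "sum f I = (\<Sum>i\<in>I. 1 - (if f i = 0 then 1 else 0))"
    using assms(2) by (intro sum.cong) auto
  also have "\<dots> = real (card I) - real (card {i \<in> I. f i = 0})"
    using assms(1) by (simp add: sum_subtractf sum.If_cases Int_def)
  finally show ?thesis .
qed

lemma (in prob_space) prob_eq_le_1_minus_prob_eq:
  fixes X :: "'a \<Rightarrow> 'b :: t1_space"
  assumes "X \<in> borel_measurable M" and "a \<noteq> b"
  shows "prob {x \<in> space M. X x = a} \<le> 1 - prob {x \<in> space M. X x = b}"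
proof -
  have b_event: "{x \<in> space M. X x = b} \<in> events"
    using assms(1) by measurable
  then have "prob {x \<in> space M. X x = a} \<le> prob (space M - {x \<in> space M. X x = b})"
    using assms(2) by (intro finite_measure_mono) auto
  also have "\<dots> = 1 - prob {x \<in> space M. X x = b}"
    using b_event by (rule prob_compl)
  finally show ?thesis .
qed

theorem lemmaC2:
  fixes M :: "'a measure" and X :: "nat \<Rightarrow> 'a \<Rightarrow> real"
    and \<gamma> :: real and u \<eta> :: nat
  assumes "prob_space M"
    and "\<gamma> \<ge> 1" and "u \<ge> 1"
    and "prob_space.indep_vars M (\<lambda>_. borel) X {1..u}"
    and "\<forall>m\<in>{1..u}. AE x in M. X m x \<in> {0, 1}"
    and "\<forall>m\<in>{1..u}. measure M {x \<in> space M. X m x = 1} = 1 - 1 / real m powr \<gamma>"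
    and "\<eta> \<ge> 1" and "\<lceil>\<Sum>m=1..u. 1 / real m powr \<gamma>\<rceil> \<le> int \<eta>" and "\<eta> \<le> u"
  shows "measure M {x \<in> space M. (\<Sum>m=1..u. X m x) < real u - real \<eta>}
           \<le> real u powr (1 + real \<eta>) / real \<eta> powr ((\<gamma> + 1) * real \<eta>)
              * exp ((\<gamma> + 1) * real \<eta>)"
proof -
  interpret prob_space M by fact
  define A where "A m = {x \<in> space M. X m x = 0}" for m
  have indep: "indep_events A {1..u}"
    unfolding A_def using assms(4) by (intro indep_eventsI_indep_vars) auto
  have prob_A: "prob (A m) \<le> 1 / real m powr \<gamma>" if "m \<in> {1..u}" for m
    using prob_eq_le_1_minus_prob_eq[of "X m" 0 1] assms(4,6) that
    by (auto simp: A_def indep_vars_def)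
  have "AE x in M. \<forall>m\<in>{1..u}. X m x \<in> {0, 1}"
    using assms(5) by (subst AE_finite_all) auto
  then have "AE x in M. x \<in> {x \<in> space M. (\<Sum>m=1..u. X m x) < real u - real \<eta>}
                \<longrightarrow> x \<in> {x \<in> space M. \<eta> \<le> card {m \<in> {1..u}. x \<in> A m}}"
    by eventually_elim (auto simp: sum_zero_one_eq_card A_def)
  then have "measure M {x \<in> space M. (\<Sum>m=1..u. X m x) < real u - real \<eta>}
               \<le> prob {x \<in> space M. \<eta> \<le> card {m \<in> {1..u}. x \<in> A m}}"
    using indep assms(7) by (intro finite_measure_mono_AE card_occurring_ge_in_events)
      (auto simp: indep_events_def)
  also have "\<dots> \<le> (\<Sum>S | S \<subseteq> {1..u} \<and> card S = \<eta>. \<Prod>m\<in>S. prob (A m))"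
    using prob_card_occurring_ge_le[OF indep _ assms(7)] by simp
  also have "\<dots> \<le> (\<Sum>S | S \<subseteq> {1..u} \<and> card S = \<eta>. \<Prod>m\<in>S. 1 / real m powr \<gamma>)"
    using prob_A by (intro sum_mono prod_mono) auto
  also have "\<dots> \<le> real (u choose \<eta>) / fact \<eta> powr \<gamma>"
    using sum_card_subsets_prod_inverse_powr_le[of "{1..u}" \<gamma> \<eta>] assms(2) by simp
  also have "\<dots> \<le> real u powr (1 + real \<eta>) / real \<eta> powr ((\<gamma> + 1) * real \<eta>)
              * exp ((\<gamma> + 1) * real \<eta>)"
    using assms(2,3,7) by (intro choose_div_fact_powr_le) auto
  finally show ?thesis .
qed

end
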